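(* Assume $q_*(y)>0$ if and only if $\mathrm{numK}(y)=0$, and let $T>0$. For every $t\in[0,T)$, every $y\in\mathcal{Y}$, every coordinate $i$ with $y_i=K$ and every $k\in\{1,\dots,K-1\}$, $$\frac{q^\gets_t(y[i\to k])}{q^\gets_t(y)}\le \frac{1}{e^{T-t}-1},$$ where $y[i\to k]$ denotes $y$ with its $i$-th coordinate replaced by $k$.
   Context: Fix integers $K\ge2$, $d\ge1$, $\mathcal{Y}=\{1,\dots,K\}^d$; the symbol $K$ is the mask token and $\mathrm{numK}(y)=\#\{i:y_i=K\}$. The masked forward process is the continuous-time Markov chain on $\mathcal{Y}$ started at $q_*$ in which each non-mask coordinate independently turns into $K$ at rate $1$ and $K$ is absorbing; i.e. with rate function $R^\to(y,y')=1$ if $y,y'$ differ in exactly one coordinate $i$ with $y_i=K$, $R^\to(y,y)=-(d-\mathrm{numK}(y))$, and $0$ otherwise. Its marginals are $q^\to_t$, and $q^\gets_t:=q^\to_{T-t}$. *)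

theory Defs
  imports "HOL-Analysis.Analysis"
begin

definition states :: "nat \<Rightarrow> nat \<Rightarrow> (nat \<Rightarrow> nat) set" where
  "states K d = PiE {..<d} (\<lambda>_. {1..K})"

definition numK :: "nat \<Rightarrow> nat \<Rightarrow> (nat \<Rightarrow> nat) \<Rightarrow> nat" where
  "numK K d y = card {i \<in> {..<d}. y i = K}"

text \<open>Rate function of the masked forward process: a non-mask coordinate jumps to K at rate 1.\<close>
definition rate_fwd :: "nat \<Rightarrow> nat \<Rightarrow> (nat \<Rightarrow> nat) \<Rightarrow> (nat \<Rightarrow> nat) \<Rightarrow> real" where
  "rate_fwd K d y y' =
     (if y' = y then - (real d - real (numK K d y))
      else if (\<exists>i<d. y i \<noteq> K \<and> y' = y(i := K)) then 1 else 0)"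

definition forward_marginals ::
  "nat \<Rightarrow> nat \<Rightarrow> ((nat \<Rightarrow> nat) \<Rightarrow> real) \<Rightarrow> (real \<Rightarrow> (nat \<Rightarrow> nat) \<Rightarrow> real) \<Rightarrow> bool" where
  "forward_marginals K d qstar q \<longleftrightarrow>
     (\<forall>y \<in> states K d. q 0 y = qstar y) \<and>
     (\<forall>t \<ge> 0. \<forall>y' \<in> states K d.
        ((\<lambda>s. q s y') has_real_derivative (\<Sum>y \<in> states K d. q t y * rate_fwd K d y y'))
          (at t within {0..}))"

end

theory Submission
  imports Defs
begin

text \<open>Each non-mask coordinate is masked independently at an exponential time of rate 1, so
  the mass of y at time s is the qstar-mass of the states agreeing with y off its masks, times
  the probability that exactly the masked coordinates of y have been masked by then. This closed
  form solves the forward equation, and the solution is unique because the equation for y only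
  involves y and states with one mask fewer. Unmasking one coordinate of y divides that
  probability by exp s - 1, while the qstar-mass can only shrink.\<close>

lemma finite_states: "finite (states K d)"
  unfolding states_def by (intro finite_PiE) auto

lemma states_fun_upd: "y \<in> states K d \<Longrightarrow> i < d \<Longrightarrow> k \<in> {1..K} \<Longrightarrow> y(i := k) \<in> states K d"
  unfolding states_def by (auto simp: PiE_iff extensional_def)

lemma states_range: "y \<in> states K d \<Longrightarrow> i < d \<Longrightarrow> y i \<in> {1..K}"
  unfolding states_def by (auto simp: PiE_iff)

definition masked :: "nat \<Rightarrow> nat \<Rightarrow> (nat \<Rightarrow> nat) \<Rightarrow> nat set" where
  "masked K d y = {j \<in> {..<d}. y j = K}"

lemma finite_masked [simp]: "finite (masked K d y)"
  unfolding masked_def by simp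

lemma numK_eq_card_masked: "numK K d y = card (masked K d y)"
  unfolding numK_def masked_def ..

lemma numK_fun_upd:
  assumes "i < d" "y i = K" "k \<noteq> K"
  shows "numK K d y = Suc (numK K d (y(i := k)))"
proof -
  have "masked K d (y(i := k)) = masked K d y - {i}"
    using assms by (auto simp: masked_def)
  moreover have "i \<in> masked K d y"
    using assms by (simp add: masked_def)
  ultimately show ?thesis
    unfolding numK_eq_card_masked by (metis card_Suc_Diff1 finite_masked)
qed

lemma inj_on_fun_upd_masked: "inj_on (\<lambda>(j, k). y(j := k)) (SIGMA j:masked K d y. {1..K-1})"
proof (rule inj_onI, clarify)
  fix j k j' k'
  assume j: "j \<in> masked K d y" and k: "k \<in> {1..K-1}" and eq: "y(j := k) = y(j' := k')"
  have "j = j'"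
  proof (rule ccontr)
    assume "j \<noteq> j'"
    then have "k = y j"
      using fun_cong[OF eq, of j] by simp
    then show False
      using j k by (auto simp: masked_def)
  qed
  then show "j = j' \<and> k = k'"
    using fun_cong[OF eq, of j] by simp
qed

lemma predecessors_eq_image:
  assumes y: "y \<in> states K d"
  shows "{x \<in> states K d - {y}. \<exists>j<d. x j \<noteq> K \<and> y = x(j := K)} =
    (\<lambda>(j, k). y(j := k)) ` (SIGMA j:masked K d y. {1..K-1})"
proof (intro equalityI subsetI)
  fix x
  assume "x \<in> {x \<in> states K d - {y}. \<exists>j<d. x j \<noteq> K \<and> y = x(j := K)}"
  then obtain j where x: "x \<in> states K d" and j: "j < d" "x j \<noteq> K" "y = x(j := K)"
    by auto
  have "x j \<in> {1..K-1}"
    using states_range[OF x j(1)] j(2) by auto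
  moreover have "x = y(j := x j)"
    using j(3) by auto
  ultimately show "x \<in> (\<lambda>(j, k). y(j := k)) ` (SIGMA j:masked K d y. {1..K-1})"
    using j by (auto simp: masked_def intro!: image_eqI[where x = "(j, x j)"])
next
  fix x
  assume "x \<in> (\<lambda>(j, k). y(j := k)) ` (SIGMA j:masked K d y. {1..K-1})"
  then obtain j k where j: "j < d" "y j = K" and k: "k \<in> {1..K-1}" and x: "x = y(j := k)"
    by (auto simp: masked_def)
  have "x \<in> states K d"
    using states_fun_upd[OF y j(1), of k] k x by auto
  moreover have "x j \<noteq> K" "x \<noteq> y" "y = x(j := K)"
    using j k x by (auto simp: fun_eq_iff)
  ultimately show "x \<in> {x \<in> states K d - {y}. \<exists>j<d. x j \<noteq> K \<and> y = x(j := K)}"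
    using j(1) by auto
qed

lemma sum_rate_fwd:
  assumes y: "y \<in> states K d"
  shows "(\<Sum>x\<in>states K d. f x * rate_fwd K d x y) =
    - (real d - real (numK K d y)) * f y + (\<Sum>j\<in>masked K d y. \<Sum>k\<in>{1..K-1}. f (y(j := k)))"
proof -
  have "(\<Sum>x\<in>states K d. f x * rate_fwd K d x y) =
      f y * rate_fwd K d y y + (\<Sum>x\<in>states K d - {y}. f x * rate_fwd K d x y)"
    using finite_states y by (rule sum.remove)
  also have "(\<Sum>x\<in>states K d - {y}. f x * rate_fwd K d x y) =
      (\<Sum>x\<in>states K d - {y}. if \<exists>j<d. x j \<noteq> K \<and> y = x(j := K) then f x else 0)"
    by (intro sum.cong) (auto simp: rate_fwd_def)
  also have "\<dots> = sum f {x \<in> states K d - {y}. \<exists>j<d. x j \<noteq> K \<and> y = x(j := K)}"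
    by (rule sum.inter_filter[symmetric]) (simp add: finite_states)
  also have "\<dots> = (\<Sum>(j, k)\<in>(SIGMA j:masked K d y. {1..K-1}). f (y(j := k)))"
    unfolding predecessors_eq_image[OF y]
    by (subst sum.reindex[OF inj_on_fun_upd_masked]) (simp add: case_prod_beta)
  also have "\<dots> = (\<Sum>j\<in>masked K d y. \<Sum>k\<in>{1..K-1}. f (y(j := k)))"
    by (simp add: sum.Sigma)
  finally show ?thesis
    by (simp add: rate_fwd_def)
qed

text \<open>This is exp (-s (d - m)) (1 - exp (-s))^m: the probability that m given coordinates are
  masked at time s and the other d - m are not.\<close>

definition mask_weight :: "nat \<Rightarrow> nat \<Rightarrow> real \<Rightarrow> real" where
  "mask_weight d m s = exp (- s * real d) * (exp s - 1) ^ m"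

lemma mask_weight_Suc: "mask_weight d (Suc m) s = (exp s - 1) * mask_weight d m s"
  unfolding mask_weight_def by simp

lemma mask_weight_pos: "s > 0 \<Longrightarrow> mask_weight d m s > 0"
  unfolding mask_weight_def by simp

lemma has_real_derivative_mask_weight:
  "(mask_weight d m has_real_derivative
     - (real d - real m) * mask_weight d m t + real m * mask_weight d (m - 1) t) (at t within X)"
proof (cases m)
  case 0
  then show ?thesis
    unfolding mask_weight_def by (auto intro!: derivative_eq_intros)
next
  case (Suc n)
  show ?thesis
    unfolding mask_weight_def Suc
    by (rule derivative_eq_intros refl)+ (simp add: algebra_simps)
qed

definition origins :: "nat \<Rightarrow> nat \<Rightarrow> (nat \<Rightarrow> nat) \<Rightarrow> (nat \<Rightarrow> nat) set" where
  "origins K d y = {x \<in> states K d. \<forall>j<d. y j \<noteq> K \<longrightarrow> x j = y j}"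

lemma origins_fun_upd_subset: "y i = K \<Longrightarrow> origins K d (y(i := k)) \<subseteq> origins K d y"
  unfolding origins_def by auto

lemma origins_unmasked:
  assumes "y \<in> states K d" "numK K d y = 0"
  shows "origins K d y = {y}"
proof -
  have "\<forall>j<d. y j \<noteq> K"
    using assms(2) by (auto simp: numK_eq_card_masked masked_def)
  then have "x = y" if "x \<in> origins K d y" for x
    using that assms(1) unfolding origins_def states_def
    by (intro PiE_ext[of x "{..<d}" "\<lambda>_. {1..K}"]) auto
  then show ?thesis
    using assms(1) by (auto simp: origins_def)
qed

lemma sum_origins_fun_upd:
  assumes i: "i < d" "y i = K" and vanish: "\<And>x. x \<in> states K d \<Longrightarrow> x i = K \<Longrightarrow> qs x = 0"
  shows "(\<Sum>k\<in>{1..K-1}. sum qs (origins K d (y(i := k)))) = sum qs (origins K d y)"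
proof -
  have "sum qs (origins K d y) = sum qs {x \<in> origins K d y. x i \<noteq> K}"
    using vanish by (intro sum.mono_neutral_right) (auto simp: origins_def finite_states)
  also have "\<dots> = (\<Sum>k\<in>{1..K-1}. sum qs {x \<in> {x \<in> origins K d y. x i \<noteq> K}. x i = k})"
  proof (rule sum.group[symmetric])
    show "(\<lambda>x. x i) ` {x \<in> origins K d y. x i \<noteq> K} \<subseteq> {1..K-1}"
      using states_range[of _ K d i] i(1) by (fastforce simp: origins_def)
  qed (simp_all add: origins_def finite_states)
  also have "\<dots> = (\<Sum>k\<in>{1..K-1}. sum qs (origins K d (y(i := k))))"
    using i by (intro sum.cong refl arg_cong[where f = "sum qs"]) (auto simp: origins_def)
  finally show ?thesis ..
qed

definition masked_marginal ::
  "nat \<Rightarrow> nat \<Rightarrow> ((nat \<Rightarrow> nat) \<Rightarrow> real) \<Rightarrow> real \<Rightarrow> (nat \<Rightarrow> nat) \<Rightarrow> real" where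
  "masked_marginal K d qs s y = mask_weight d (numK K d y) s * sum qs (origins K d y)"

lemma masked_marginal_0:
  assumes y: "y \<in> states K d" and vanish: "\<And>i. i < d \<Longrightarrow> y i = K \<Longrightarrow> qs y = 0"
  shows "masked_marginal K d qs 0 y = qs y"
proof (cases "numK K d y = 0")
  case True
  then show ?thesis
    by (simp add: masked_marginal_def mask_weight_def origins_unmasked[OF y])
next
  case False
  then obtain i where "i < d" "y i = K"
    by (auto simp: numK_eq_card_masked masked_def)
  with False show ?thesis
    by (simp add: masked_marginal_def mask_weight_def vanish)
qed

lemma masked_marginal_forward_equation:
  assumes y: "y \<in> states K d"
    and vanish: "\<And>x i. x \<in> states K d \<Longrightarrow> i < d \<Longrightarrow> x i = K \<Longrightarrow> qs x = 0"
  shows "((\<lambda>s. masked_marginal K d qs s y) has_real_derivative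
           (\<Sum>x\<in>states K d. masked_marginal K d qs t x * rate_fwd K d x y)) (at t within X)"
proof -
  define m where "m = numK K d y"
  have unmask: "(\<Sum>k\<in>{1..K-1}. masked_marginal K d qs t (y(j := k))) =
      mask_weight d (m - 1) t * sum qs (origins K d y)" if "j \<in> masked K d y" for j
  proof -
    from that have j: "j < d" "y j = K"
      by (simp_all add: masked_def)
    have "numK K d (y(j := k)) = m - 1" if "k \<in> {1..K-1}" for k
      using numK_fun_upd[of j d y K k] j that by (auto simp: m_def)
    then have "(\<Sum>k\<in>{1..K-1}. masked_marginal K d qs t (y(j := k))) =
        mask_weight d (m - 1) t * (\<Sum>k\<in>{1..K-1}. sum qs (origins K d (y(j := k))))"
      by (simp add: masked_marginal_def sum_distrib_left)
    also have "\<dots> = mask_weight d (m - 1) t * sum qs (origins K d y)"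
      using sum_origins_fun_upd[of j d y K qs] vanish j by simp
    finally show ?thesis .
  qed
  have "((\<lambda>s. masked_marginal K d qs s y) has_real_derivative
      (- (real d - real m) * mask_weight d m t + real m * mask_weight d (m - 1) t)
        * sum qs (origins K d y)) (at t within X)"
    unfolding masked_marginal_def m_def by (intro DERIV_cmult_right has_real_derivative_mask_weight)
  also have "(- (real d - real m) * mask_weight d m t + real m * mask_weight d (m - 1) t)
        * sum qs (origins K d y) = - (real d - real m) * masked_marginal K d qs t y +
      (\<Sum>j\<in>masked K d y. \<Sum>k\<in>{1..K-1}. masked_marginal K d qs t (y(j := k)))"
    using unmask by (simp add: masked_marginal_def m_def numK_eq_card_masked algebra_simps)
  also have "- (real d - real m) * masked_marginal K d qs t y +
      (\<Sum>j\<in>masked K d y. \<Sum>k\<in>{1..K-1}. masked_marginal K d qs t (y(j := k))) =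
      (\<Sum>x\<in>states K d. masked_marginal K d qs t x * rate_fwd K d x y)"
    by (simp add: sum_rate_fwd[OF y] m_def)
  finally show ?thesis .
qed

lemma forward_marginals_masked_marginal:
  assumes vanish: "\<And>x i. x \<in> states K d \<Longrightarrow> i < d \<Longrightarrow> x i = K \<Longrightarrow> qs x = 0"
  shows "forward_marginals K d qs (masked_marginal K d qs)"
  unfolding forward_marginals_def
proof (intro conjI ballI allI impI)
  fix y
  assume y: "y \<in> states K d"
  show "masked_marginal K d qs 0 y = qs y"
    using y vanish by (intro masked_marginal_0)
  show "((\<lambda>s. masked_marginal K d qs s y) has_real_derivative
      (\<Sum>x\<in>states K d. masked_marginal K d qs t x * rate_fwd K d x y)) (at t within {0..})" for t
    using y vanish by (intro masked_marginal_forward_equation)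
qed

lemma homogeneous_linear_ode_zero:
  fixes g :: "real \<Rightarrow> real"
  assumes g0: "g 0 = 0"
    and g': "\<And>t. t \<ge> 0 \<Longrightarrow> (g has_real_derivative c * g t) (at t within {0..})"
    and t: "t \<ge> 0"
  shows "g t = 0"
proof -
  define h where "h s = exp (- c * s) * g s" for s
  have "(h has_real_derivative 0) (at s within {0..})" if "s \<in> {0..}" for s
  proof -
    have "(h has_real_derivative exp (- c * s) * (- c) * g s + c * g s * exp (- c * s)) (at s within {0..})"
      unfolding h_def using g' that by (auto intro!: derivative_eq_intros)
    then show ?thesis
      by (simp add: algebra_simps)
  qed
  then obtain C where "\<forall>s\<in>{0..}. h s = C"
    using has_field_derivative_zero_constant[of "{0::real..}" h] by auto
  moreover have "h 0 = 0"
    by (simp add: h_def g0)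
  ultimately have "h t = 0"
    using t by auto
  then show ?thesis
    by (simp add: h_def)
qed

lemma forward_marginals_unique:
  assumes q: "forward_marginals K d qs q" and p: "forward_marginals K d qs p"
  shows "y \<in> states K d \<Longrightarrow> s \<ge> 0 \<Longrightarrow> q s y = p s y"
proof (induction "numK K d y" arbitrary: y s rule: less_induct)
  case less
  have unmasked_eq: "q t (y(j := k)) = p t (y(j := k))"
    if "j \<in> masked K d y" "k \<in> {1..K-1}" "t \<ge> 0" for j k t
  proof -
    from that have j: "j < d" "y j = K" and k: "k \<noteq> K" "k \<in> {1..K}"
      by (auto simp: masked_def)
    have "numK K d (y(j := k)) < numK K d y"
      using numK_fun_upd[of j d y K k] j k by simp
    then show ?thesis
      using less.hyps states_fun_upd[OF less.prems(1) j(1) k(2)] that(3) by blast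
  qed
  define c where "c = real d - real (numK K d y)"
  have "((\<lambda>s. q s y - p s y) has_real_derivative (- c * (q t y - p t y))) (at t within {0..})"
    if t: "t \<ge> 0" for t
  proof -
    have "((\<lambda>s. q s y) has_real_derivative (\<Sum>x\<in>states K d. q t x * rate_fwd K d x y))
        (at t within {0..})"
      using q less.prems(1) t unfolding forward_marginals_def by blast
    moreover have "((\<lambda>s. p s y) has_real_derivative (\<Sum>x\<in>states K d. p t x * rate_fwd K d x y))
        (at t within {0..})"
      using p less.prems(1) t unfolding forward_marginals_def by blast
    ultimately have "((\<lambda>s. q s y - p s y) has_real_derivative
        (\<Sum>x\<in>states K d. q t x * rate_fwd K d x y) - (\<Sum>x\<in>states K d. p t x * rate_fwd K d x y))
        (at t within {0..})"
      by (rule DERIV_diff)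
    also have "(\<Sum>x\<in>states K d. q t x * rate_fwd K d x y) - (\<Sum>x\<in>states K d. p t x * rate_fwd K d x y) =
        - c * (q t y - p t y)"
    proof -
      have "(\<Sum>j\<in>masked K d y. \<Sum>k\<in>{1..K-1}. q t (y(j := k))) =
          (\<Sum>j\<in>masked K d y. \<Sum>k\<in>{1..K-1}. p t (y(j := k)))"
        using unmasked_eq t by (intro sum.cong refl) simp
      then show ?thesis
        unfolding sum_rate_fwd[OF less.prems(1)] c_def by (simp add: algebra_simps)
    qed
    finally show ?thesis .
  qed
  moreover have "q 0 y - p 0 y = 0"
    using q p less.prems(1) by (simp add: forward_marginals_def)
  ultimately have "q s y - p s y = 0"
    using homogeneous_linear_ode_zero[of "\<lambda>s. q s y - p s y" "- c"] less.prems(2) by blast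
  then show ?case
    by simp
qed

lemma masked_marginal_unmask_ratio_le:
  assumes nonneg: "\<And>x. x \<in> states K d \<Longrightarrow> qs x \<ge> 0"
    and i: "i < d" "y i = K" and k: "k \<in> {1..K-1}" and s: "s > 0"
  shows "masked_marginal K d qs s (y(i := k)) / masked_marginal K d qs s y \<le> 1 / (exp s - 1)"
proof -
  define w where "w = mask_weight d (numK K d (y(i := k))) s"
  define S' where "S' = sum qs (origins K d (y(i := k)))"
  define S where "S = sum qs (origins K d y)"
  have "numK K d y = Suc (numK K d (y(i := k)))"
    using numK_fun_upd[of i d y K k] i k by auto
  then have "masked_marginal K d qs s y = (exp s - 1) * w * S"
    by (simp add: masked_marginal_def mask_weight_Suc w_def S_def)
  moreover have "masked_marginal K d qs s (y(i := k)) = w * S'"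
    by (simp add: masked_marginal_def w_def S'_def)
  moreover have "w > 0"
    unfolding w_def using s by (rule mask_weight_pos)
  ultimately have ratio: "masked_marginal K d qs s (y(i := k)) / masked_marginal K d qs s y =
      (S' / S) / (exp s - 1)"
    by simp
  have "S' \<le> S" "0 \<le> S'"
    using origins_fun_upd_subset[of y i K d k] i nonneg finite_states
    unfolding S_def S'_def origins_def by (auto intro!: sum_mono2 sum_nonneg)
  then have "S' / S \<le> 1"
    by (cases "S = 0") simp_all
  then show ?thesis
    unfolding ratio by (rule divide_right_mono) (use s in simp)
qed

theorem mainTheorem4:
  fixes K d :: nat and qstar :: "(nat \<Rightarrow> nat) \<Rightarrow> real"
    and q :: "real \<Rightarrow> (nat \<Rightarrow> nat) \<Rightarrow> real" and T :: real
  assumes "K \<ge> 2" and "d \<ge> 1"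
    and "\<forall>y \<in> states K d. qstar y \<ge> 0"
    and "(\<Sum>y \<in> states K d. qstar y) = 1"
    and "\<forall>y \<in> states K d. qstar y > 0 \<longleftrightarrow> numK K d y = 0"
    and "forward_marginals K d qstar q"
    and "T > 0"
  shows "\<forall>t \<in> {0..<T}. \<forall>y \<in> states K d. \<forall>i < d. \<forall>k \<in> {1..K-1}. y i = K \<longrightarrow>
           q (T - t) (y(i := k)) / q (T - t) y \<le> 1 / (exp (T - t) - 1)"
proof (intro ballI allI impI)
  fix t y i k
  assume t: "t \<in> {0..<T}" and y: "y \<in> states K d" and i: "i < d" and k: "k \<in> {1..K-1}"
    and yi: "y i = K"
  have nonneg: "\<And>x. x \<in> states K d \<Longrightarrow> qstar x \<ge> 0"
    using assms(3) by blast
  have vanish: "qstar x = 0" if "x \<in> states K d" "j < d" "x j = K" for x j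
  proof -
    have "numK K d x \<noteq> 0"
      using that by (auto simp: numK_eq_card_masked masked_def)
    then show ?thesis
      using assms(5) nonneg that(1) by force
  qed
  have q_eq: "q (T - t) z = masked_marginal K d qstar (T - t) z" if "z \<in> states K d" for z
    using forward_marginals_unique[OF assms(6) forward_marginals_masked_marginal[OF vanish] that] t
    by simp
  have "y(i := k) \<in> states K d"
    using states_fun_upd[OF y i, of k] k by auto
  then show "q (T - t) (y(i := k)) / q (T - t) y \<le> 1 / (exp (T - t) - 1)"
    using masked_marginal_unmask_ratio_le[of K d qstar i y k] nonneg i yi k t q_eq y by simp
qed

end
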